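(* Let $c\in(0,1)$ and let $(M_n)_{n\ge1}$ be integers with $1\le M_n\le kn-1$ and $M_n/(kn)\to c$. Then for $k=2$, \[ \lim_{n\to\infty}P_{n,2}(\mathcal{S}(n,2;M_n))=-2c(1-c)+(2c-c^2)\log(2-c)-(2c+c^2)\log c, \] and for $k=3$, \[ \lim_{n\to\infty}P_{n,3}(\mathcal{S}(n,3;M_n))=-\tfrac32(1-c)c(1+3c)-(3c+3c^2+c^3)\log c+\big(\tfrac32c+\tfrac32c^2-c^3\big)\log(c^2-3c+3)+3\sqrt3(c^2-c)\arctan\Big(\frac{3-2c}{\sqrt3}\Big)+\frac{\sqrt3\,\pi}2(c-c^2). \]
   Context: Fix integers $k\ge2$, $n\ge1$. There are $kn$ items, $k$ items at each of the ranks $1,2,\dots,n$ (rank $n$ is highest). The items are revealed one at a time in a uniformly random order, i.e. the sequence of ranks is a uniformly random permutation of the multiset $\{1^k,2^k,\dots,n^k\}$; $P_{n,k}$ denotes this uniform probability. For $M\in\{1,\dots,kn-1\}$, the strategy $\mathcal{S}(n,k;M)$ lets the first $M$ items pass and then selects the first later-arriving item whose rank is greater than or equal to the highest rank among the first $M$ items (if such an item exists; otherwise nothing is selected). $P_{n,k}(\mathcal{S}(n,k;M))$ denotes the probability that this strategy selects an item of rank $n$. *)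

theory Defs
  imports Complex_Main
begin

text \<open>An arrangement of the multiset {1^k,...,n^k}: a sequence s of length k*n
  (positions 0..k*n-1; s i = 0 outside) taking each rank 1..n exactly k times.\<close>
definition arrangements :: "nat \<Rightarrow> nat \<Rightarrow> (nat \<Rightarrow> nat) set" where
  "arrangements n k = {s. (\<forall>i. k*n \<le> i \<longrightarrow> s i = 0)
      \<and> (\<forall>i<k*n. s i \<in> {1..n})
      \<and> (\<forall>r\<in>{1..n}. card {i. i < k*n \<and> s i = r} = k)}"

definition strategy_wins :: "nat \<Rightarrow> nat \<Rightarrow> nat \<Rightarrow> (nat \<Rightarrow> nat) \<Rightarrow> bool" where
  "strategy_wins n k M s = (let t = Max (s ` {..<M}) in
     \<exists>j. M \<le> j \<and> j < k*n \<and> t \<le> s j \<and> (\<forall>i. M \<le> i \<and> i < j \<longrightarrow> s i < t) \<and> s j = n)"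

definition win_prob :: "nat \<Rightarrow> nat \<Rightarrow> nat \<Rightarrow> real" where
  "win_prob n k M = real (card {s \<in> arrangements n k. strategy_wins n k M s})
                    / real (card (arrangements n k))"

end

theory Submission
  imports
    Defs
    "HOL-Combinatorics.Multiset_Permutations"
    "HOL-Computational_Algebra.Formal_Power_Series"
    "HOL-Analysis.Uniform_Limit"
begin

text \<open>An arrangement is a uniformly random permutation of the multiset of ranks. The strategy
  wins iff, for some rank t and some a > 0, the first M items are all at most t with exactly a
  copies of t, and the first later item of rank at least t is an n. Conditioning on the first item
  gives, by induction on M, the probability of this event in closed form: a hypergeometric factor in
  falling factorials times the chance that the first later item of rank at least t is an n. With
  j = n - t and M/(kn) -> c each term converges, and all terms are dominated by (1 - c/2)^j, so
  Tannery's theorem turns the limit into a series. For k = 2, 3 this series consists of power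
  series sum_j u^(kj+r)/(kj+r) with u = 1 - c, which are antiderivatives of t^(r-1)/(1 - t^k)
  and hence logarithms and arctangents.\<close>

(* HOL-Analysis' notation \<open>*s\<close> would otherwise swallow "3*sqrt 3" in the statement. *)
no_notation vector_scalar_mult (infixl \<open>*s\<close> 70)

section \<open>Uniformly random permutations of a multiset\<close>

definition perm_prob :: "'a multiset \<Rightarrow> ('a list \<Rightarrow> bool) \<Rightarrow> real" where
  "perm_prob A Q = real (card {xs \<in> permutations_of_multiset A. Q xs})
                   / real (card (permutations_of_multiset A))"

lemma card_permutations_of_multiset_pos: "card (permutations_of_multiset A) > 0"
  by (simp add: card_gt_0_iff)

lemma perm_prob_const: "perm_prob A (\<lambda>_. b) = (if b then 1 else 0)"
  using card_permutations_of_multiset_pos[of A] by (simp add: perm_prob_def)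

lemma perm_prob_sum_disjoint:
  assumes "finite I"
    and disj: "\<And>xs i j. xs \<in> permutations_of_multiset A \<Longrightarrow> i \<in> I \<Longrightarrow> j \<in> I \<Longrightarrow> i \<noteq> j
                 \<Longrightarrow> \<not> (Q i xs \<and> Q j xs)"
    and iff: "\<And>xs. xs \<in> permutations_of_multiset A \<Longrightarrow> P xs \<longleftrightarrow> (\<exists>i\<in>I. Q i xs)"
  shows "perm_prob A P = (\<Sum>i\<in>I. perm_prob A (Q i))"
proof -
  have "{xs \<in> permutations_of_multiset A. P xs} = (\<Union>i\<in>I. {xs \<in> permutations_of_multiset A. Q i xs})"
    using iff by auto
  then have "card {xs \<in> permutations_of_multiset A. P xs}
      = (\<Sum>i\<in>I. card {xs \<in> permutations_of_multiset A. Q i xs})"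
    by (simp only:) (rule card_UN_disjoint; use assms(1) disj in auto)
  then show ?thesis unfolding perm_prob_def by (simp add: sum_divide_distrib)
qed

lemma perm_prob_Cons:
  assumes "A \<noteq> {#}"
  shows "perm_prob A Q = (\<Sum>x\<in>set_mset A. real (count A x) / real (size A)
                            * perm_prob (A - {#x#}) (\<lambda>xs. Q (x # xs)))"
proof -
  have "{xs \<in> permutations_of_multiset A. Q xs} =
      (\<Union>x\<in>set_mset A. (#) x ` {ys \<in> permutations_of_multiset (A - {#x#}). Q (x # ys)})"
    using permutations_of_multiset_nonempty[OF assms] by auto
  then have card: "card {xs \<in> permutations_of_multiset A. Q xs} =
      (\<Sum>x\<in>set_mset A. card {ys \<in> permutations_of_multiset (A - {#x#}). Q (x # ys)})"
    by (simp only:) (subst card_UN_disjoint; auto simp: card_image inj_on_def)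
  have "size A > 0" using assms by (simp add: nonempty_has_size)
  moreover have "real (card (permutations_of_multiset (A - {#x#}))) =
       real (card (permutations_of_multiset A) * count A x) / real (size A)" if "x \<in># A" for x
    using real_card_permutations_of_multiset_remove[OF that] .
  ultimately show ?thesis
    unfolding perm_prob_def card of_nat_sum sum_divide_distrib
    using card_permutations_of_multiset_pos[of A]
    by (intro sum.cong refl) (simp add: field_simps)
qed

lemma real_size_filter_mset:
  "real (size (filter_mset P A)) = (\<Sum>x\<in>set_mset A. if P x then real (count A x) else 0)"
proof -
  have "size (filter_mset P A) = (\<Sum>x\<in>set_mset (filter_mset P A). count (filter_mset P A) x)"
    by (rule size_multiset_overloaded_eq)
  also have "\<dots> = (\<Sum>x\<in>set_mset A. if P x then count A x else 0)"
    by (simp add: sum.inter_filter[symmetric] cong: sum.cong)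
  finally show ?thesis by (simp add: of_nat_sum if_distrib cong: if_cong)
qed

lemma perm_prob_Cons_below:
  fixes A :: "'a::linorder multiset"
  assumes "A \<noteq> {#}"
    and below: "\<And>x. x \<in># A \<Longrightarrow> x < t \<Longrightarrow> perm_prob (A - {#x#}) (\<lambda>xs. Q (x # xs)) = p"
  shows "perm_prob A Q = real (size (filter_mset (\<lambda>x. x < t) A)) / real (size A) * p
           + (\<Sum>x\<in>set_mset A. if t \<le> x
                then real (count A x) / real (size A) * perm_prob (A - {#x#}) (\<lambda>xs. Q (x # xs))
                else 0)"
  unfolding perm_prob_Cons[OF assms(1)] real_size_filter_mset sum_divide_distrib sum_distrib_right
    sum.distrib[symmetric]
  using below by (intro sum.cong refl) (auto simp: not_le)

definition size_ge :: "'a::linorder \<Rightarrow> 'a multiset \<Rightarrow> nat" where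
  "size_ge t A = size (filter_mset (\<lambda>x. t \<le> x) A)"

lemma size_ge_le_size: "size_ge t A \<le> size A"
  unfolding size_ge_def by simp

lemma count_le_size_ge: "t \<le> x \<Longrightarrow> count A x \<le> size_ge t A"
  unfolding size_ge_def using count_le_size[of "filter_mset (\<lambda>x. t \<le> x) A" x] by simp

lemma size_ge_remove_less: "x < t \<Longrightarrow> size_ge t (A - {#x#}) = size_ge t A"
  unfolding size_ge_def by simp

lemma size_ge_remove_self: "t \<in># A \<Longrightarrow> size_ge t (A - {#t#}) = size_ge t A - 1"
  unfolding size_ge_def by (simp add: size_Diff_submset)

lemma size_filter_mset_less:
  fixes A :: "'a::linorder multiset"
  shows "size (filter_mset (\<lambda>x. x < t) A) = size A - size_ge t A"
proof -
  have "size A = size (filter_mset (\<lambda>x. x < t) A) + size (filter_mset (\<lambda>x. \<not> x < t) A)"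
    by (metis multiset_partition size_union)
  moreover have "filter_mset (\<lambda>x. \<not> x < t) A = filter_mset (\<lambda>x. t \<le> x) A"
    by (rule filter_mset_cong) (auto simp: not_less)
  ultimately show ?thesis by (simp add: size_ge_def)
qed

lemma perm_prob_find:
  fixes A :: "'a::linorder multiset"
  assumes "t \<le> n"
  shows "perm_prob A (\<lambda>xs. find (\<lambda>x. t \<le> x) xs = Some n) = real (count A n) / real (size_ge t A)"
proof (induction "size A" arbitrary: A)
  case 0
  then show ?case by (simp add: perm_prob_def)
next
  case (Suc m)
  have ne: "A \<noteq> {#}" using Suc.hyps(2) by auto
  have below: "perm_prob (A - {#x#}) (\<lambda>xs. find (\<lambda>x. t \<le> x) (x # xs) = Some n)
      = real (count A n) / real (size_ge t A)" if "x \<in># A" "x < t" for x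
  proof -
    have "\<not> t \<le> x" "count (A - {#x#}) n = count A n" using that assms by auto
    then show ?thesis
      using Suc.hyps(1)[of "A - {#x#}"] Suc.hyps(2) that by (simp add: size_Diff_submset size_ge_remove_less)
  qed
  have above: "(\<Sum>x\<in>set_mset A. if t \<le> x then real (count A x) / real (size A)
        * perm_prob (A - {#x#}) (\<lambda>xs. find (\<lambda>x. t \<le> x) (x # xs) = Some n) else 0)
      = (\<Sum>x\<in>set_mset A. if x = n then real (count A x) / real (size A) else 0)"
    using assms by (intro sum.cong refl) (auto simp: perm_prob_const)
  have "perm_prob A (\<lambda>xs. find (\<lambda>x. t \<le> x) xs = Some n)
      = real (size A - size_ge t A) / real (size A) * (real (count A n) / real (size_ge t A))
        + real (count A n) / real (size A)"
    using perm_prob_Cons_below[where t = t, OF ne below] above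
    by (simp add: size_filter_mset_less sum.delta' not_in_iff)
  also have "\<dots> = real (count A n) / real (size_ge t A)"
  proof -
    have "count A n \<le> size_ge t A"
      using assms by (rule count_le_size_ge)
    moreover have "size_ge t A \<le> size A" "size A \<noteq> 0" using Suc.hyps(2) size_ge_le_size by auto
    ultimately show ?thesis
      by (cases "size_ge t A = 0") (simp_all add: of_nat_diff divide_simps algebra_simps)
  qed
  finally show ?case .
qed

lemma perm_prob_Cons_split:
  fixes A :: "'a::linorder multiset"
  assumes "A \<noteq> {#}"
    and below: "\<And>x. x \<in># A \<Longrightarrow> x < t \<Longrightarrow> perm_prob (A - {#x#}) (\<lambda>xs. Q (x # xs)) = p"
    and above: "\<And>x. x \<in># A \<Longrightarrow> t < x \<Longrightarrow> perm_prob (A - {#x#}) (\<lambda>xs. Q (x # xs)) = 0"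
    and top: "t \<in># A \<Longrightarrow> perm_prob (A - {#t#}) (\<lambda>xs. Q (t # xs)) = q"
  shows "perm_prob A Q = real (size A - size_ge t A) / real (size A) * p
           + real (count A t) / real (size A) * q"
proof -
  have "(\<Sum>x\<in>set_mset A. if t \<le> x
        then real (count A x) / real (size A) * perm_prob (A - {#x#}) (\<lambda>xs. Q (x # xs)) else 0)
      = (\<Sum>x\<in>set_mset A. if x = t then real (count A x) / real (size A) * q else 0)"
    using above top by (intro sum.cong refl) auto
  then show ?thesis
    using perm_prob_Cons_below[OF assms(1) below] by (simp add: size_filter_mset_less sum.delta' not_in_iff)
qed

section \<open>Falling factorials\<close>

definition ffact :: "real \<Rightarrow> nat \<Rightarrow> real" where
  "ffact x m = (\<Prod>i<m. x - real i)"

lemma ffact_0 [simp]: "ffact x 0 = 1"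
  by (simp add: ffact_def)

lemma ffact_Suc: "ffact x (Suc m) = ffact x m * (x - real m)"
  by (simp add: ffact_def)

lemma ffact_Suc_left: "ffact x (Suc m) = x * ffact (x - 1) m"
  unfolding ffact_def prod.lessThan_Suc_shift by (simp add: algebra_simps)

lemma ffact_add: "ffact x (p + q) = ffact x p * ffact (x - real p) q"
  by (induction q) (simp_all add: ffact_Suc algebra_simps)

lemma ffact_plus_1: "ffact (x + 1) (Suc m) = ffact x (Suc m) + real (Suc m) * ffact x m"
proof -
  have "ffact (x + 1) (Suc m) = (x + 1) * ffact x m" by (simp add: ffact_Suc_left)
  then show ?thesis by (simp add: ffact_Suc algebra_simps)
qed

lemma ffact_of_nat_eq_0_iff: "ffact (real x) m = 0 \<longleftrightarrow> x < m"
  unfolding ffact_def by auto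

lemma ffact_of_nat_pos: "m \<le> x \<Longrightarrow> ffact (real x) m > 0"
  unfolding ffact_def by (rule prod_pos) auto

lemma ffact_of_nat_nonneg: "ffact (real x) m \<ge> 0"
  using ffact_of_nat_pos[of m x] ffact_of_nat_eq_0_iff[of x m] by (cases "x < m") auto

lemma ffact_of_nat_pred_left:
  "0 < G \<Longrightarrow> 0 < N \<Longrightarrow> ffact (real N) G = real N * ffact (real (N - 1)) (G - 1)"
  by (cases G) (simp_all add: ffact_Suc_left of_nat_diff)

lemma ffact_of_nat_pred_right:
  "0 < G \<Longrightarrow> G \<le> N \<Longrightarrow> ffact (real (N - 1)) G = ffact (real (N - 1)) (G - 1) * real (N - G)"
  by (cases G) (simp_all add: ffact_Suc of_nat_diff)

lemma ffact_eq_fact_gbinomial: "ffact x p = fact p * (x gchoose p)"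
  unfolding ffact_def gbinomial_prod_rev atLeast0LessThan by simp

lemma ffact_vandermonde:
  "(\<Sum>a\<le>k. real (k choose a) * ffact x a * ffact y (k - a)) = ffact (x + y) k"
proof -
  have "real (k choose a) * ffact x a * ffact y (k - a)
      = fact k * ((x gchoose a) * (y gchoose (k - a)))" if "a \<le> k" for a
  proof -
    have "fact a * fact (k - a) * real (k choose a) = fact k"
      using binomial_fact_lemma[OF that] by (metis of_nat_fact of_nat_mult)
    then show ?thesis
      unfolding ffact_eq_fact_gbinomial by (metis (no_types, lifting) mult.assoc mult.commute)
  qed
  then have "(\<Sum>a\<le>k. real (k choose a) * ffact x a * ffact y (k - a))
      = fact k * (\<Sum>a\<le>k. (x gchoose a) * (y gchoose (k - a)))"
    by (simp add: sum_distrib_left)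
  also have "\<dots> = ffact (x + y) k"
    by (simp add: gbinomial_Vandermonde[folded atMost_atLeast0] ffact_eq_fact_gbinomial)
  finally show ?thesis .
qed

lemma ffact_ratio_le:
  assumes "Y \<le> X" "p \<le> X"
  shows "ffact (real Y) p / ffact (real X) p \<le> (real Y / real X) ^ p"
  using assms(2)
proof (induction p)
  case 0
  then show ?case by simp
next
  case (Suc p)
  show ?case
  proof (cases "Y < Suc p")
    case True
    then show ?thesis by (simp add: ffact_of_nat_eq_0_iff[THEN iffD2])
  next
    case False
    have Xp: "real X - real p > 0" using Suc.prems by simp
    have step: "(real Y - real p) / (real X - real p) \<le> real Y / real X"
      using assms(1) Xp False by (simp add: divide_simps) (simp add: algebra_simps mult_right_mono)
    have "ffact (real Y) (Suc p) / ffact (real X) (Suc p)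
        = ffact (real Y) p / ffact (real X) p * ((real Y - real p) / (real X - real p))"
      by (simp add: ffact_Suc)
    also have "\<dots> \<le> (real Y / real X) ^ p * (real Y / real X)"
      using Suc False Xp
      by (intro mult_mono step) (auto intro: divide_nonneg_nonneg ffact_of_nat_nonneg)
    finally show ?thesis by (simp add: mult.commute)
  qed
qed

lemma tendsto_ffact_div_power:
  fixes x N :: "nat \<Rightarrow> real"
  assumes "(\<lambda>n. x n / N n) \<longlonglongrightarrow> L" and "filterlim N at_top sequentially"
  shows "(\<lambda>n. ffact (x n) p / N n ^ p) \<longlonglongrightarrow> L ^ p"
proof -
  have "(\<lambda>n. \<Prod>i<p. x n / N n - real i / N n) \<longlonglongrightarrow> (\<Prod>i<p. L - 0)"
    using filterlim_at_top_imp_at_infinity[OF assms(2)]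
    by (intro tendsto_prod tendsto_diff assms(1) tendsto_divide_0[OF tendsto_const])
  moreover have "eventually (\<lambda>n. N n > 0) sequentially"
    using assms(2) by (simp add: filterlim_at_top_dense)
  then have "eventually (\<lambda>n. (\<Prod>i<p. x n / N n - real i / N n) = ffact (x n) p / N n ^ p)
      sequentially"
    by eventually_elim (simp add: ffact_def diff_divide_distrib[symmetric] prod_dividef)
  ultimately show ?thesis by (simp add: Lim_transform_eventually)
qed

section \<open>The exact winning probability\<close>

text \<open>Of \<open>N\<close> items in uniformly random order, \<open>G\<close> are high and \<open>T\<close> of these are top. Then
  \<open>prefix_prob N G T M a\<close> is the probability that the first \<open>M\<close> items contain exactly \<open>a\<close> top
  items and no other high item.\<close>
definition prefix_prob :: "nat \<Rightarrow> nat \<Rightarrow> nat \<Rightarrow> nat \<Rightarrow> nat \<Rightarrow> real" where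
  "prefix_prob N G T M a =
     real (T choose a) * ffact (real M) a * ffact (real (N - M)) (G - a) / ffact (real N) G"

lemma prefix_prob_degenerate:
  assumes "T \<le> G" "Suc M \<le> N" "\<not> (a \<le> T \<and> 0 < G)"
  shows "prefix_prob N G T (Suc M) a
     = real (N - G) / real N * prefix_prob (N - 1) G T M a
       + real T / real N * (if a = 0 then 0 else prefix_prob (N - 1) (G - 1) (T - 1) M (a - 1))"
proof (cases "T < a")
  case True
  then have "(T - 1) choose (a - 1) = 0 \<or> T = 0" by (cases T) auto
  then show ?thesis using True by (auto simp: prefix_prob_def binomial_eq_0)
next
  case False
  then have "G = 0" "T = 0" using assms by auto
  then show ?thesis using assms(2) by (cases a) (auto simp: prefix_prob_def)
qed

lemma prefix_prob_step_low:
  assumes GN: "G \<le> N" and TG: "T \<le> G" and MN: "Suc M \<le> N" and "a \<le> T" "0 < G"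
  shows "real (N - G) / real N * prefix_prob (N - 1) G T M a
    = real (T choose a) * ffact (real M) a * ffact (real (N - Suc M)) (G - a) / ffact (real N) G"
proof (cases "N = G")
  case True
  have "ffact (real M) a * ffact (real (N - Suc M)) (G - a) = 0"
  proof (cases "M < a")
    case False
    then have "N - Suc M < G - a" using True MN assms(4) TG by linarith
    then show ?thesis by (simp add: ffact_of_nat_eq_0_iff)
  qed (simp add: ffact_of_nat_eq_0_iff)
  then show ?thesis using True by auto
next
  case False
  have "N - 1 - M = N - Suc M" by simp
  then have "prefix_prob (N - 1) G T M a
      = real (T choose a) * ffact (real M) a * ffact (real (N - Suc M)) (G - a)
        / (ffact (real (N - 1)) (G - 1) * real (N - G))"
    unfolding prefix_prob_def ffact_of_nat_pred_right[OF \<open>0 < G\<close> GN] by simp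
  moreover have "c / n * (X / (D * c)) = X / (n * D)" if "c \<noteq> 0" for c n X D :: real
    using that by (simp add: field_simps)
  ultimately show ?thesis
    using False GN MN by (simp add: ffact_of_nat_pred_left[OF \<open>0 < G\<close>])
qed

lemma prefix_prob_step_top:
  assumes "T \<le> G" and MN: "Suc M \<le> N" and "0 < a" "a \<le> T"
  shows "real T / real N * prefix_prob (N - 1) (G - 1) (T - 1) M (a - 1)
    = real (T choose a) * (real a * ffact (real M) (a - 1)) * ffact (real (N - Suc M)) (G - a)
      / ffact (real N) G"
proof -
  obtain b where b: "a = Suc b" using \<open>0 < a\<close> by (cases a) auto
  define F where "F = ffact (real (N - Suc M)) (G - a)"
  have "G - 1 - b = G - a" "N - 1 - M = N - Suc M" using b by simp_all
  then have "real T / real N * prefix_prob (N - 1) (G - 1) (T - 1) M (a - 1)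
      = real T * real ((T - 1) choose b) * ffact (real M) b * F
        / (real N * ffact (real (N - 1)) (G - 1))"
    unfolding prefix_prob_def F_def b by simp
  also have "real T * real ((T - 1) choose b) = real (T choose a) * real a"
    using binomial_absorption[of b T] unfolding b by (metis of_nat_mult mult.commute)
  also have "real N * ffact (real (N - 1)) (G - 1) = ffact (real N) G"
    using assms by (intro ffact_of_nat_pred_left[symmetric]) auto
  finally show ?thesis unfolding F_def b by (simp add: ac_simps)
qed

text \<open>The recursion obtained by conditioning on whether the first item is low or top.\<close>
lemma prefix_prob_Suc:
  assumes "G \<le> N" "T \<le> G" "Suc M \<le> N"
  shows "prefix_prob N G T (Suc M) a
     = real (N - G) / real N * prefix_prob (N - 1) G T M a
       + real T / real N * (if a = 0 then 0 else prefix_prob (N - 1) (G - 1) (T - 1) M (a - 1))"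
proof (cases "a \<le> T \<and> 0 < G")
  case False
  then show ?thesis using prefix_prob_degenerate assms(2,3) by blast
next
  case True
  show ?thesis
  proof (cases "a = 0")
    case False
    then obtain b where b: "a = Suc b" by (cases a) auto
    define F where "F = ffact (real (N - Suc M)) (G - a)"
    have "ffact (real (Suc M)) a = ffact (real M) a + real a * ffact (real M) (a - 1)"
      using ffact_plus_1[of "real M" b] b by (simp add: add.commute)
    then have "prefix_prob N G T (Suc M) a
        = real (T choose a) * ffact (real M) a * F / ffact (real N) G
          + real (T choose a) * (real a * ffact (real M) (a - 1)) * F / ffact (real N) G"
      unfolding prefix_prob_def F_def by (simp only: distrib_left distrib_right add_divide_distrib)
    also have "\<dots> = real (N - G) / real N * prefix_prob (N - 1) G T M a
        + real T / real N * prefix_prob (N - 1) (G - 1) (T - 1) M (a - 1)"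
      unfolding F_def using prefix_prob_step_low[OF assms] prefix_prob_step_top[OF assms(2,3)]
        True False by simp
    finally show ?thesis using False by simp
  qed (use prefix_prob_step_low[OF assms, of 0] True in \<open>simp add: prefix_prob_def[of N G T]\<close>)
qed

definition bounded_prefix_find :: "nat \<Rightarrow> nat \<Rightarrow> 'a::linorder \<Rightarrow> 'a \<Rightarrow> 'a list \<Rightarrow> bool" where
  "bounded_prefix_find M a t n xs \<longleftrightarrow>
     (\<forall>x\<in>set (take M xs). x \<le> t) \<and> count (mset (take M xs)) t = a
     \<and> find (\<lambda>x. t \<le> x) (drop M xs) = Some n"

lemma bounded_prefix_find_0:
  "bounded_prefix_find 0 a t n xs \<longleftrightarrow> a = 0 \<and> find (\<lambda>x. t \<le> x) xs = Some n"
  unfolding bounded_prefix_find_def by auto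

lemma bounded_prefix_find_Cons:
  "bounded_prefix_find (Suc M) a t n (x # xs) \<longleftrightarrow>
     (if t < x then False
      else if x < t then bounded_prefix_find M a t n xs
      else a \<noteq> 0 \<and> bounded_prefix_find M (a - 1) t n xs)"
  unfolding bounded_prefix_find_def by auto

text \<open>Once the prefix holds \<open>a\<close> copies of \<open>t\<close>, the first later item \<open>\<ge> t\<close> is uniformly distributed
  over the remaining such items.\<close>
definition hit_ratio :: "'a::linorder \<Rightarrow> 'a \<Rightarrow> 'a multiset \<Rightarrow> nat \<Rightarrow> real" where
  "hit_ratio t n A a =
     (real (count A n) - (if n = t then real a else 0)) / (real (size_ge t A) - real a)"

lemma hit_ratio_remove_less:
  assumes "x < t" "t \<le> n"
  shows "hit_ratio t n (A - {#x#}) a = hit_ratio t n A a"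
proof -
  have "x \<noteq> n" using assms by auto
  then show ?thesis unfolding hit_ratio_def using assms(1) by (simp add: size_ge_remove_less)
qed

lemma hit_ratio_remove_self:
  assumes "t \<in># A" "a > 0"
  shows "hit_ratio t n (A - {#t#}) (a - 1) = hit_ratio t n A a"
proof -
  have "1 \<le> count A t" using assms(1) by (simp add: Suc_le_eq)
  moreover have "1 \<le> size_ge t A" using calculation count_le_size_ge[of t t A, OF order.refl] by linarith
  ultimately have "real (size_ge t A - 1) = real (size_ge t A) - 1"
    "real (count A t - 1) = real (count A t) - 1" by simp_all
  then show ?thesis
    unfolding hit_ratio_def size_ge_remove_self[OF assms(1)] using assms(2)
    by (cases "n = t") (simp_all add: of_nat_diff)
qed

lemma perm_prob_bounded_prefix_find_0:
  fixes A :: "'a::linorder multiset"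
  assumes "t \<le> n"
  shows "perm_prob A (bounded_prefix_find 0 a t n)
           = prefix_prob (size A) (size_ge t A) (count A t) 0 a * hit_ratio t n A a"
proof (cases "a = 0")
  case True
  have "bounded_prefix_find 0 0 t n = (\<lambda>xs. find (\<lambda>x. t \<le> x) xs = Some n)"
    by (simp add: bounded_prefix_find_0 fun_eq_iff)
  moreover have "ffact (real (size A)) (size_ge t A) > 0"
    by (rule ffact_of_nat_pos[OF size_ge_le_size])
  ultimately show ?thesis using True
    by (simp add: perm_prob_find[OF assms] prefix_prob_def hit_ratio_def)
next
  case False
  then have "bounded_prefix_find 0 a t n = (\<lambda>_. False)"
    by (simp add: bounded_prefix_find_0 fun_eq_iff)
  then show ?thesis using False ffact_of_nat_eq_0_iff[of 0 a]
    by (simp add: perm_prob_const prefix_prob_def)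
qed

lemma perm_prob_bounded_prefix_find_Suc:
  fixes A :: "'a::linorder multiset"
  assumes "t \<le> n" "Suc M \<le> size A"
    and IH: "\<And>B b. M \<le> size B \<Longrightarrow> perm_prob B (bounded_prefix_find M b t n)
               = prefix_prob (size B) (size_ge t B) (count B t) M b * hit_ratio t n B b"
  shows "perm_prob A (bounded_prefix_find (Suc M) a t n)
           = prefix_prob (size A) (size_ge t A) (count A t) (Suc M) a * hit_ratio t n A a"
proof -
  define N G T where "N = size A" and "G = size_ge t A" and "T = count A t"
  have size_remove: "size (A - {#x#}) = N - 1" if "x \<in># A" for x
    using that by (simp add: N_def size_Diff_submset)
  have "perm_prob (A - {#x#}) (\<lambda>xs. bounded_prefix_find (Suc M) a t n (x # xs))
      = prefix_prob (N - 1) G T M a * hit_ratio t n A a" if "x \<in># A" "x < t" for x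
  proof -
    have "\<not> t < x" "x \<noteq> t" using that by auto
    then show ?thesis
      using that assms IH[of "A - {#x#}" a]
      by (simp add: bounded_prefix_find_Cons size_remove size_ge_remove_less hit_ratio_remove_less
          N_def G_def T_def)
  qed
  moreover have "perm_prob (A - {#t#}) (\<lambda>xs. bounded_prefix_find (Suc M) a t n (t # xs))
      = (if a = 0 then 0 else prefix_prob (N - 1) (G - 1) (T - 1) M (a - 1)) * hit_ratio t n A a"
    if "t \<in># A"
    using that assms IH[of "A - {#t#}" "a - 1"] hit_ratio_remove_self[of t A a n]
    by (simp add: bounded_prefix_find_Cons perm_prob_const size_remove size_ge_remove_self
        N_def G_def T_def)
  moreover have "A \<noteq> {#}" using assms(2) by auto
  ultimately have "perm_prob A (bounded_prefix_find (Suc M) a t n)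
      = (real (N - G) / real N * prefix_prob (N - 1) G T M a + real T / real N
         * (if a = 0 then 0 else prefix_prob (N - 1) (G - 1) (T - 1) M (a - 1))) * hit_ratio t n A a"
    by (subst perm_prob_Cons_split[where t = t]) (auto simp: bounded_prefix_find_Cons perm_prob_const
        N_def G_def T_def algebra_simps)
  also have "\<dots> = prefix_prob N G T (Suc M) a * hit_ratio t n A a"
    using prefix_prob_Suc[of G N T M a] assms(2) size_ge_le_size[of t A] count_le_size_ge[of t t A, OF order.refl]
    by (simp add: N_def G_def T_def)
  finally show ?thesis by (simp add: N_def G_def T_def)
qed

lemma perm_prob_bounded_prefix_find:
  fixes A :: "'a::linorder multiset"
  assumes "t \<le> n" "M \<le> size A"
  shows "perm_prob A (bounded_prefix_find M a t n)
           = prefix_prob (size A) (size_ge t A) (count A t) M a * hit_ratio t n A a"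
  using assms(2)
proof (induction M arbitrary: A a)
  case 0
  show ?case by (rule perm_prob_bounded_prefix_find_0[OF assms(1)])
next
  case (Suc M)
  then show ?case by (intro perm_prob_bounded_prefix_find_Suc[OF assms(1)]) auto
qed

definition rank_mset :: "nat \<Rightarrow> nat \<Rightarrow> nat multiset" where
  "rank_mset n k = (\<Sum>r\<in>{1..n}. replicate_mset k r)"

lemma count_rank_mset: "count (rank_mset n k) x = (if x \<in> {1..n} then k else 0)"
  unfolding rank_mset_def count_sum by (simp add: sum.delta' del: One_nat_def)

lemma size_rank_mset: "size (rank_mset n k) = k * n"
  unfolding rank_mset_def by simp

lemma set_mset_rank_mset: "k \<ge> 1 \<Longrightarrow> set_mset (rank_mset n k) = {1..n}"
  using count_rank_mset[of n k] by (auto simp: set_mset_def)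

lemma size_ge_rank_mset:
  assumes "t \<in> {1..n}" "k \<ge> 1"
  shows "size_ge t (rank_mset n k) = k * (n - t + 1)"
proof -
  have "real (size_ge t (rank_mset n k)) = (\<Sum>x\<in>{1..n}. if t \<le> x then real k else 0)"
    unfolding size_ge_def real_size_filter_mset set_mset_rank_mset[OF assms(2)]
    by (rule sum.cong) (auto simp: count_rank_mset)
  also have "\<dots> = (\<Sum>x\<in>{x\<in>{1..n}. t \<le> x}. real k)"
    by (rule sum.inter_filter[symmetric]) simp
  also have "{x\<in>{1..n}. t \<le> x} = {t..n}" using assms by auto
  finally have "real (size_ge t (rank_mset n k)) = real k * real (n - t + 1)"
    using assms(1) by (simp add: Suc_diff_le)
  then show ?thesis by (metis of_nat_eq_iff of_nat_mult)
qed

lemma count_mset_map_upt: "count (mset (map s [0..<N])) x = card {i. i < N \<and> s i = x}"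
  unfolding count_mset count_list_eq_length_filter length_filter_conv_card
  by (rule arg_cong[where f = card]) auto

lemma map_arrangement_in_permutations:
  assumes "s \<in> arrangements n k"
  shows "map s [0..<k*n] \<in> permutations_of_multiset (rank_mset n k)"
proof (rule permutations_of_multisetI, rule multiset_eqI)
  fix x
  have "x \<notin> {1..n} \<Longrightarrow> {i. i < k*n \<and> s i = x} = {}"
    using assms unfolding arrangements_def by auto
  then show "count (mset (map s [0..<k*n])) x = count (rank_mset n k) x"
    using assms unfolding count_mset_map_upt count_rank_mset arrangements_def by auto
qed

lemma nth_permutation_in_arrangements:
  assumes "xs \<in> permutations_of_multiset (rank_mset n k)"
  shows "(\<lambda>i. if i < k*n then xs ! i else 0) \<in> arrangements n k"
    and "map (\<lambda>i. if i < k*n then xs ! i else 0) [0..<k*n] = xs"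
proof -
  let ?s = "\<lambda>i. if i < k*n then xs ! i else 0"
  have m: "mset xs = rank_mset n k" using assms by (rule permutations_of_multisetD)
  have len: "length xs = k * n" using arg_cong[OF m, of size] by (simp add: size_rank_mset)
  show map: "map ?s [0..<k*n] = xs"
    by (rule nth_equalityI) (simp_all add: len)
  have "xs ! i \<in> {1..n}" if "i < k*n" for i
  proof -
    have "xs ! i \<in># rank_mset n k" using that len m by (metis nth_mem set_mset_mset)
    then show ?thesis by (metis count_rank_mset count_eq_zero_iff)
  qed
  moreover have "card {i. i < k*n \<and> ?s i = r} = k" if "r \<in> {1..n}" for r
    using count_mset_map_upt[of ?s "k*n" r, symmetric] that by (simp add: map m count_rank_mset)
  ultimately show "?s \<in> arrangements n k"
    unfolding arrangements_def by auto
qed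

lemma bij_betw_arrangements_permutations:
  "bij_betw (\<lambda>s. map s [0..<k*n]) (arrangements n k) (permutations_of_multiset (rank_mset n k))"
proof (rule bij_betw_byWitness[where f' = "\<lambda>xs i. if i < k*n then xs ! i else 0"])
  show "\<forall>s\<in>arrangements n k. (\<lambda>i. if i < k*n then map s [0..<k*n] ! i else 0) = s"
    unfolding arrangements_def by auto
  show "\<forall>xs\<in>permutations_of_multiset (rank_mset n k).
      map (\<lambda>i. if i < k*n then xs ! i else 0) [0..<k*n] = xs"
    using nth_permutation_in_arrangements(2) by blast
  show "(\<lambda>s. map s [0..<k*n]) ` arrangements n k \<subseteq> permutations_of_multiset (rank_mset n k)"
    using map_arrangement_in_permutations by blast
  show "(\<lambda>xs i. if i < k*n then xs ! i else 0) ` permutations_of_multiset (rank_mset n k)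
      \<subseteq> arrangements n k"
    using nth_permutation_in_arrangements(1) by blast
qed

definition threshold_selects :: "nat \<Rightarrow> 'a::linorder \<Rightarrow> 'a list \<Rightarrow> bool" where
  "threshold_selects M v xs \<longleftrightarrow> find (\<lambda>x. Max (set (take M xs)) \<le> x) (drop M xs) = Some v"

lemma find_map_upt:
  "find P (map s [M..<N]) = Some v \<longleftrightarrow>
    (\<exists>j. M \<le> j \<and> j < N \<and> P (s j) \<and> s j = v \<and> (\<forall>i. M \<le> i \<and> i < j \<longrightarrow> \<not> P (s i)))"
  unfolding find_Some_iff
proof safe
  fix i assume i: "i < length (map s [M..<N])" "P (map s [M..<N] ! i)"
    "\<forall>j<i. \<not> P (map s [M..<N] ! j)"
  show "\<exists>j. M \<le> j \<and> j < N \<and> P (s j) \<and> s j = map s [M..<N] ! i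
      \<and> (\<forall>i. M \<le> i \<and> i < j \<longrightarrow> \<not> P (s i))"
  proof (intro exI[of _ "M + i"] conjI allI impI)
    fix l assume l: "M \<le> l \<and> l < M + i"
    then have "\<not> P (map s [M..<N] ! (l - M))" using i(3) by auto
    then show "\<not> P (s l)" using l i(1) by auto
  qed (use i in auto)
next
  fix j assume "M \<le> j" "j < N" "P (s j)" "\<forall>i. M \<le> i \<and> i < j \<longrightarrow> \<not> P (s i)"
  then show "\<exists>i<length (map s [M..<N]). P (map s [M..<N] ! i) \<and> s j = map s [M..<N] ! i
      \<and> (\<forall>j<i. \<not> P (map s [M..<N] ! j))"
    by (intro exI[of _ "j - M"]) auto
qed

lemma strategy_wins_iff_threshold_selects:
  assumes "M \<le> k * n"
  shows "strategy_wins n k M s \<longleftrightarrow> threshold_selects M n (map s [0..<k*n])"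
proof -
  have take: "take M (map s [0..<k*n]) = map s [0..<M]" using assms by (simp add: take_map)
  have drop: "drop M (map s [0..<k*n]) = map s [M..<k*n]" by (simp add: drop_map)
  have prefix: "s ` {..<M} = set (map s [0..<M])" by (simp add: atLeast0LessThan)
  show ?thesis
    unfolding strategy_wins_def threshold_selects_def Let_def take drop find_map_upt prefix
    by (auto simp: not_le)
qed

lemma win_prob_eq_perm_prob:
  assumes "M \<le> k * n"
  shows "win_prob n k M = perm_prob (rank_mset n k) (threshold_selects M n)"
proof -
  let ?f = "\<lambda>s. map s [0..<k*n]"
  note bij = bij_betw_arrangements_permutations[of k n]
  let ?W = "{s \<in> arrangements n k. strategy_wins n k M s}"
  have "inj_on ?f ?W"
    using bij_betw_imp_inj_on[OF bij] by (rule inj_on_subset) auto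
  then have "card ?W = card (?f ` ?W)" by (simp add: card_image)
  also have "?f ` ?W = {xs \<in> ?f ` arrangements n k. threshold_selects M n xs}"
    using strategy_wins_iff_threshold_selects[OF assms] by auto
  also have "?f ` arrangements n k = permutations_of_multiset (rank_mset n k)"
    using bij_betw_imp_surj_on[OF bij] .
  finally have "card ?W
      = card {xs \<in> permutations_of_multiset (rank_mset n k). threshold_selects M n xs}" .
  then show ?thesis
    unfolding win_prob_def perm_prob_def by (simp add: bij_betw_same_card[OF bij])
qed

lemma threshold_selects_iff_bounded_prefix_find:
  assumes xs: "xs \<in> permutations_of_multiset (rank_mset n k)"
    and M: "1 \<le> M" "M \<le> k * n" and k: "k \<ge> 1"
  shows "threshold_selects M n xs \<longleftrightarrow> (\<exists>(t, a)\<in>{1..n} \<times> {1..k}. bounded_prefix_find M a t n xs)"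
proof
  have m: "mset xs = rank_mset n k" using xs by (rule permutations_of_multisetD)
  have "length xs = k * n" using arg_cong[OF m, of size] by (simp add: size_rank_mset)
  then have ne: "set (take M xs) \<noteq> {}" using M by (cases xs) auto
  define t where "t = Max (set (take M xs))"
  define a where "a = count (mset (take M xs)) t"
  have t: "t \<in> set (take M xs)" unfolding t_def using ne by (intro Max_in) auto
  then have "t \<in># rank_mset n k" using m by (metis in_set_takeD set_mset_mset)
  then have t_range: "t \<in> {1..n}" using set_mset_rank_mset[OF k] by simp
  have "a \<le> count (mset xs) t" unfolding a_def
    by (metis append_take_drop_id count_union le_add1 mset_append)
  then have a_range: "a \<in> {1..k}" using t t_range m by (simp add: a_def count_rank_mset Suc_le_eq)
  assume "threshold_selects M n xs"
  then have "bounded_prefix_find M a t n xs"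
    unfolding bounded_prefix_find_def threshold_selects_def a_def t_def using ne by simp
  then show "\<exists>(t, a)\<in>{1..n} \<times> {1..k}. bounded_prefix_find M a t n xs" using t_range a_range by blast
next
  assume "\<exists>(t, a)\<in>{1..n} \<times> {1..k}. bounded_prefix_find M a t n xs"
  then obtain t a where "a \<in> {1..k}" and E: "bounded_prefix_find M a t n xs" by auto
  then have "t \<in> set (take M xs)" unfolding bounded_prefix_find_def by (metis atLeastAtMost_iff
      count_eq_zero_iff not_one_le_zero set_mset_mset)
  then have "Max (set (take M xs)) = t" using E unfolding bounded_prefix_find_def by (intro Max_eqI) auto
  then show "threshold_selects M n xs" using E unfolding bounded_prefix_find_def threshold_selects_def by simp
qed

text \<open>With \<open>a > 0\<close> the threshold \<open>t\<close> is the maximum of the prefix, and \<open>a\<close> its multiplicity there.\<close>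
lemma bounded_prefix_find_unique:
  assumes "bounded_prefix_find M a t n xs" "bounded_prefix_find M a' t' n xs" "0 < a" "0 < a'"
  shows "t = t' \<and> a = a'"
proof -
  have "t \<in> set (take M xs)" "t' \<in> set (take M xs)"
    using assms unfolding bounded_prefix_find_def by (metis count_greater_zero_iff set_mset_mset)+
  then have "t = t'" using assms(1,2) unfolding bounded_prefix_find_def by (auto intro: order.antisym)
  then show ?thesis using assms(1,2) unfolding bounded_prefix_find_def by auto
qed

text \<open>This is \<open>hit_ratio t n (rank_mset n k) a\<close> written in terms of \<open>j = n - t\<close>.\<close>
definition hit_prob :: "nat \<Rightarrow> nat \<Rightarrow> nat \<Rightarrow> real" where
  "hit_prob k j a = (real k - (if j = 0 then real a else 0)) / (real (k * (j + 1)) - real a)"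

text \<open>The probability of winning with threshold rank \<open>n - j\<close>.\<close>
definition win_term :: "nat \<Rightarrow> nat \<Rightarrow> nat \<Rightarrow> nat \<Rightarrow> real" where
  "win_term k n M j = (\<Sum>a\<in>{1..k}. prefix_prob (k * n) (k * (j + 1)) k M a * hit_prob k j a)"

theorem win_prob_eq_sum:
  assumes "1 \<le> M" "M \<le> k * n" "k \<ge> 1"
  shows "win_prob n k M = (\<Sum>j<n. win_term k n M j)"
proof -
  let ?A = "rank_mset n k"
  have "win_prob n k M = perm_prob ?A (threshold_selects M n)"
    by (rule win_prob_eq_perm_prob[OF assms(2)])
  also have "\<dots> = (\<Sum>p\<in>{1..n} \<times> {1..k}. perm_prob ?A (bounded_prefix_find M (snd p) (fst p) n))"
    by (rule perm_prob_sum_disjoint)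
      (use threshold_selects_iff_bounded_prefix_find[OF _ assms(1-3)] bounded_prefix_find_unique
        in \<open>fastforce+\<close>)
  also have "\<dots> = (\<Sum>t\<in>{1..n}. \<Sum>a\<in>{1..k}. perm_prob ?A (bounded_prefix_find M a t n))"
    unfolding sum.cartesian_product by (rule sum.cong) auto
  also have "\<dots> = (\<Sum>t\<in>{1..n}. \<Sum>a\<in>{1..k}.
      prefix_prob (k * n) (k * (n - t + 1)) k M a * hit_prob k (n - t) a)"
  proof (intro sum.cong refl)
    fix t a assume t: "t \<in> {1..n}" and "a \<in> {1..k}"
    have "n = t \<longleftrightarrow> n - t = 0" using t by auto
    then show "perm_prob ?A (bounded_prefix_find M a t n)
        = prefix_prob (k * n) (k * (n - t + 1)) k M a * hit_prob k (n - t) a"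
      using t assms
      by (simp add: perm_prob_bounded_prefix_find size_rank_mset size_ge_rank_mset count_rank_mset
          hit_ratio_def hit_prob_def)
  qed
  also have "\<dots> = (\<Sum>j<n. win_term k n M j)"
    unfolding win_term_def by (rule sum.reindex_bij_witness[of _ "\<lambda>j. n - j" "\<lambda>t. n - t"]) auto
  finally show ?thesis .
qed

section \<open>The limit as a series\<close>

lemma hit_prob_nonneg: "a \<le> k \<Longrightarrow> 0 \<le> hit_prob k j a"
  and hit_prob_le_1: "a \<le> k \<Longrightarrow> hit_prob k j a \<le> 1"
proof -
  assume a: "a \<le> k"
  have "k \<le> k * j" if "j \<noteq> 0" using that by simp
  then have "a \<le> k * j" if "j \<noteq> 0" using a that le_trans by blast
  then have "real a \<le> real k * real j" if "j \<noteq> 0" using that by (metis of_nat_le_iff of_nat_mult)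
  then have "0 \<le> real k - (if j = 0 then real a else 0)"
    "real k - (if j = 0 then real a else 0) \<le> real (k * (j + 1)) - real a"
    using a by (auto simp: algebra_simps)
  then show "0 \<le> hit_prob k j a" "hit_prob k j a \<le> 1"
    unfolding hit_prob_def by (auto intro: divide_le_eq_1_pos[THEN iffD2] simp: divide_le_eq_1)
qed

lemma prefix_prob_nonneg: "0 \<le> prefix_prob N G T M a"
  unfolding prefix_prob_def by (intro divide_nonneg_nonneg mult_nonneg_nonneg ffact_of_nat_nonneg) auto

text \<open>Summed over the number of top items, only the \<open>G\<close> high non-top items must avoid the prefix.\<close>
lemma sum_prefix_prob:
  assumes "G + T \<le> N" "M \<le> N"
  shows "(\<Sum>a\<le>T. prefix_prob N (G + T) T M a) = ffact (real (N - M)) G / ffact (real N) G"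
proof -
  have split_N: "ffact (real N) (G + T) = ffact (real N) G * ffact (real (N - G)) T"
    using ffact_add[of "real N" G T] assms(1) by (simp add: of_nat_diff)
  have pos: "ffact (real (N - G)) T > 0" using assms(1) by (intro ffact_of_nat_pos) simp
  have "prefix_prob N (G + T) T M a = ffact (real (N - M)) G / ffact (real N) G
      * (real (T choose a) * ffact (real M) a * ffact (real (N - M) - real G) (T - a)
         / ffact (real (N - G)) T)" if "a \<le> T" for a
  proof -
    have "ffact (real (N - M)) (G + T - a) = ffact (real (N - M)) G * ffact (real (N - M) - real G) (T - a)"
      using ffact_add[of "real (N - M)" G "T - a"] that by simp
    then show ?thesis unfolding prefix_prob_def split_N by (simp add: field_simps)
  qed
  then have "(\<Sum>a\<le>T. prefix_prob N (G + T) T M a) = ffact (real (N - M)) G / ffact (real N) G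
      * ((\<Sum>a\<le>T. real (T choose a) * ffact (real M) a * ffact (real (N - M) - real G) (T - a))
         / ffact (real (N - G)) T)"
    by (simp add: sum_distrib_left sum_divide_distrib)
  moreover have "(\<Sum>a\<le>T. real (T choose a) * ffact (real M) a * ffact (real (N - M) - real G) (T - a))
      = ffact (real (N - G)) T"
  proof -
    have "real M + (real (N - M) - real G) = real (N - G)"
      using assms by (simp add: of_nat_diff)
    then show ?thesis by (metis ffact_vandermonde)
  qed
  ultimately show ?thesis using pos by simp
qed

lemma win_term_nonneg: "0 \<le> win_term k n M j"
  unfolding win_term_def by (auto intro!: sum_nonneg mult_nonneg_nonneg prefix_prob_nonneg hit_prob_nonneg)

lemma win_term_le:
  assumes "M \<le> k * n" "j < n"
  shows "win_term k n M j \<le> (real (k * n - M) / real (k * n)) ^ (k * j)"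
proof -
  have "win_term k n M j \<le> (\<Sum>a\<in>{1..k}. prefix_prob (k * n) (k * (j + 1)) k M a)"
    unfolding win_term_def
    by (intro sum_mono mult_right_le_one_le prefix_prob_nonneg hit_prob_nonneg hit_prob_le_1) auto
  also have "\<dots> \<le> (\<Sum>a\<le>k. prefix_prob (k * n) (k * j + k) k M a)"
    unfolding distrib_left mult_1_right by (intro sum_mono2) (auto simp: prefix_prob_nonneg)
  also have "\<dots> = ffact (real (k * n - M)) (k * j) / ffact (real (k * n)) (k * j)"
  proof (rule sum_prefix_prob)
    show "k * j + k \<le> k * n" using assms(2) by (metis Suc_leI add.commute mult_Suc_right mult_le_mono2)
  qed (use assms(1) in simp)
  also have "\<dots> \<le> (real (k * n - M) / real (k * n)) ^ (k * j)"
    using assms by (intro ffact_ratio_le) auto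
  finally show ?thesis .
qed

lemma tendsto_prefix_prob:
  fixes N M :: "nat \<Rightarrow> nat"
  assumes N: "filterlim N at_top sequentially" and M: "eventually (\<lambda>n. M n \<le> N n) sequentially"
    and lim: "(\<lambda>n. real (M n) / real (N n)) \<longlonglongrightarrow> c" and "a \<le> G"
  shows "(\<lambda>n. prefix_prob (N n) G T (M n) a) \<longlonglongrightarrow> real (T choose a) * c ^ a * (1 - c) ^ (G - a)"
proof -
  have N': "filterlim (\<lambda>n. real (N n)) at_top sequentially"
    using filterlim_compose[OF filterlim_real_sequentially N] by (simp add: o_def)
  have "eventually (\<lambda>n. Suc 0 \<le> N n) sequentially"
    using N by (simp add: filterlim_at_top)
  then have ev_pos: "eventually (\<lambda>n. 0 < N n) sequentially"
    by eventually_elim simp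
  have "(\<lambda>n. 1 - real (M n) / real (N n)) \<longlonglongrightarrow> 1 - c" by (intro tendsto_intros lim)
  moreover have "eventually (\<lambda>n. 1 - real (M n) / real (N n) = real (N n - M n) / real (N n)) sequentially"
    using ev_pos M by eventually_elim (simp add: of_nat_diff diff_divide_distrib)
  ultimately have lim': "(\<lambda>n. real (N n - M n) / real (N n)) \<longlonglongrightarrow> 1 - c"
    by (rule Lim_transform_eventually)
  have "eventually (\<lambda>n. real (N n) / real (N n) = 1) sequentially"
    using ev_pos by eventually_elim simp
  then have lim1: "(\<lambda>n. real (N n) / real (N n)) \<longlonglongrightarrow> 1"
    by (rule tendsto_eventually)
  have "(\<lambda>n. real (T choose a) * (ffact (real (M n)) a / real (N n) ^ a)
      * (ffact (real (N n - M n)) (G - a) / real (N n) ^ (G - a))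
      / (ffact (real (N n)) G / real (N n) ^ G))
    \<longlonglongrightarrow> real (T choose a) * c ^ a * (1 - c) ^ (G - a) / 1 ^ G"
    by (intro tendsto_intros tendsto_ffact_div_power lim lim' lim1 N') simp
  then have "(\<lambda>n. real (T choose a) * (ffact (real (M n)) a / real (N n) ^ a)
      * (ffact (real (N n - M n)) (G - a) / real (N n) ^ (G - a))
      / (ffact (real (N n)) G / real (N n) ^ G))
    \<longlonglongrightarrow> real (T choose a) * c ^ a * (1 - c) ^ (G - a)"
    by simp
  moreover have "eventually (\<lambda>n. real (T choose a) * (ffact (real (M n)) a / real (N n) ^ a)
      * (ffact (real (N n - M n)) (G - a) / real (N n) ^ (G - a))
      / (ffact (real (N n)) G / real (N n) ^ G) = prefix_prob (N n) G T (M n) a) sequentially"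
    using ev_pos
  proof eventually_elim
    case (elim n)
    have "real (N n) ^ G = real (N n) ^ a * real (N n) ^ (G - a)"
      using \<open>a \<le> G\<close> by (simp add: power_add[symmetric])
    moreover have "C * (x / p) * (y / q) / (z / (p * q)) = C * x * y / z"
      if "p \<noteq> 0" "q \<noteq> 0" for C x y z p q :: real
      using that by (cases "z = 0") (simp_all add: field_simps)
    ultimately show ?case using elim unfolding prefix_prob_def by simp
  qed
  ultimately show ?thesis by (rule Lim_transform_eventually)
qed

definition limit_term :: "nat \<Rightarrow> real \<Rightarrow> nat \<Rightarrow> real" where
  "limit_term k c j =
     (\<Sum>a\<in>{1..k}. real (k choose a) * c ^ a * (1 - c) ^ (k * (j + 1) - a) * hit_prob k j a)"

lemma tendsto_win_term:
  fixes M :: "nat \<Rightarrow> nat"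
  assumes "k \<ge> 1" "eventually (\<lambda>n. M n \<le> k * n) sequentially"
    and "(\<lambda>n. real (M n) / real (k * n)) \<longlonglongrightarrow> c"
  shows "(\<lambda>n. win_term k n (M n) j) \<longlonglongrightarrow> limit_term k c j"
proof -
  have "filterlim (\<lambda>n. k * n) at_top sequentially"
    using assms(1) by (intro filterlim_at_top_mono[OF filterlim_ident]) auto
  then show ?thesis
    unfolding win_term_def limit_term_def
    by (intro tendsto_sum tendsto_mult tendsto_const tendsto_prefix_prob assms(2,3)) auto
qed

lemma win_term_le_geometric:
  assumes "k \<ge> 1" "n \<ge> 1" "j < n" "M \<le> k * n" "real M / real (k * n) > c / 2" "0 \<le> c"
  shows "win_term k n M j \<le> (1 - c / 2) ^ j"
proof -
  have "real (k * n - M) / real (k * n) = 1 - real M / real (k * n)"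
    using assms by (simp add: of_nat_diff diff_divide_distrib)
  then have "real (k * n - M) / real (k * n) \<le> 1 - c / 2" using assms(5) by linarith
  moreover have "0 \<le> real (k * n - M) / real (k * n)" by simp
  ultimately have ratio: "0 \<le> real (k * n - M) / real (k * n)"
    "real (k * n - M) / real (k * n) \<le> 1 - c / 2" by simp_all
  have "win_term k n M j \<le> (real (k * n - M) / real (k * n)) ^ (k * j)"
    using win_term_le[OF assms(4,3)] .
  also have "\<dots> \<le> (1 - c / 2) ^ (k * j)" using ratio by (intro power_mono) auto
  also have "\<dots> \<le> (1 - c / 2) ^ j"
  proof (rule power_decreasing)
    show "0 \<le> 1 - c / 2" "1 - c / 2 \<le> 1" using ratio assms(6) by linarith+
  qed (use assms(1) in simp)
  finally show ?thesis .
qed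

theorem win_prob_tendsto_suminf:
  fixes M :: "nat \<Rightarrow> nat"
  assumes k: "k \<ge> 1" and c: "0 < c" "c \<le> 1"
    and M: "\<And>n. n \<ge> 1 \<Longrightarrow> 1 \<le> M n \<and> M n \<le> k * n"
    and lim: "(\<lambda>n. real (M n) / real (k * n)) \<longlonglongrightarrow> c"
  shows "(\<lambda>n. win_prob n k (M n)) \<longlonglongrightarrow> (\<Sum>j. limit_term k c j)"
proof -
  define w where "w j n = (if j < n then win_term k n (M n) j else 0)" for j n
  have "eventually (\<lambda>n. M n \<le> k * n) sequentially"
    using eventually_ge_at_top[of 1] by eventually_elim (use M in auto)
  then have "(\<lambda>n. win_term k n (M n) j) \<longlonglongrightarrow> limit_term k c j" for j
    by (rule tendsto_win_term[OF k _ lim])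
  moreover have "eventually (\<lambda>n. win_term k n (M n) j = w j n) sequentially" for j
    using eventually_gt_at_top[of j] by eventually_elim (simp add: w_def)
  ultimately have pointwise: "(\<lambda>n. w j n) \<longlonglongrightarrow> limit_term k c j" for j
    by (rule Lim_transform_eventually)
  obtain n0 where n0: "\<And>n. n \<ge> n0 \<Longrightarrow> real (M n) / real (k * n) > c / 2"
    using order_tendstoD(1)[OF lim, of "c / 2"] c by (auto simp: eventually_sequentially)
  have "norm (w j n) \<le> (1 - c / 2) ^ j" if "n \<ge> max n0 1" for j n
    using that c M[of n] n0[of n] win_term_le_geometric[OF k, of n j "M n" c] win_term_nonneg[of k n "M n" j]
    by (auto simp: w_def)
  then have dominated: "eventually (\<lambda>(j, n). norm (w j n) \<le> (1 - c / 2) ^ j) (at_top \<times>\<^sub>F sequentially)"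
    unfolding eventually_prod_sequentially by (intro exI[of _ "max n0 1"]) auto
  have "(\<lambda>n. \<Sum>j. w j n) \<longlonglongrightarrow> (\<Sum>j. limit_term k c j)"
    using c by (intro tannerys_theorem[where M = "\<lambda>j. (1 - c / 2) ^ j", THEN conjunct2, THEN conjunct2]
        pointwise dominated summable_geometric) auto
  moreover have "eventually (\<lambda>n. (\<Sum>j. w j n) = win_prob n k (M n)) sequentially"
    using eventually_ge_at_top[of 1]
  proof eventually_elim
    case (elim n)
    have "(\<lambda>j. w j n) sums (\<Sum>j<n. w j n)" by (rule sums_finite) (simp_all add: w_def)
    then show ?case
      using win_prob_eq_sum[of "M n" k n] M[OF elim] k by (simp add: w_def sums_iff)
  qed
  ultimately show ?thesis by (rule Lim_transform_eventually)
qed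

section \<open>Summing the series for k = 2 and k = 3\<close>

lemma sums_reindex_residue:
  fixes f :: "nat \<Rightarrow> real"
  assumes "0 < k" "\<rho> < k" and zero: "\<And>n. n mod k \<noteq> \<rho> \<Longrightarrow> f n = 0"
  shows "(\<lambda>j. f (k * j + \<rho>)) sums s \<longleftrightarrow> f sums s"
proof (rule sums_mono_reindex)
  show "strict_mono (\<lambda>j. k * j + \<rho>)" using assms(1) by (simp add: strict_mono_def)
  show "f n = 0" if "n \<notin> range (\<lambda>j. k * j + \<rho>)" for n
  proof (rule zero)
    show "n mod k \<noteq> \<rho>"
    proof
      assume "n mod k = \<rho>"
      then have "n = k * (n div k) + \<rho>" by (metis div_mult_mod_eq mult.commute)
      then show False using that by auto
    qed
  qed
qed

lemma sums_geometric_residue: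
  fixes x :: real
  assumes "0 < k" "\<rho> < k" "\<bar>x\<bar> < 1"
  shows "(\<lambda>n. (if n mod k = \<rho> then 1 else 0) * x ^ n) sums (x ^ \<rho> / (1 - x ^ k))"
proof -
  have "\<bar>x ^ k\<bar> < 1" using assms by (simp add: power_abs power_less_one_iff)
  then have "(\<lambda>j. x ^ \<rho> * (x ^ k) ^ j) sums (x ^ \<rho> * (1 / (1 - x ^ k)))"
    by (intro sums_mult geometric_sums[simplified]) simp
  moreover have "x ^ (k * j + \<rho>) = x ^ \<rho> * (x ^ k) ^ j" for j
    by (simp add: power_add power_mult)
  ultimately show ?thesis
    using assms(1,2) by (subst sums_reindex_residue[symmetric, OF assms(1,2)]) simp_all
qed

text \<open>The series is the antiderivative, vanishing at \<open>0\<close>, of the geometric series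
  \<open>t ^ (r - 1) / (1 - t ^ k) = (\<Sum>j. t ^ (k * j + r - 1))\<close>.\<close>
lemma sums_power_div_exponent:
  assumes k: "0 < k" and r: "1 \<le> r" "r \<le> k"
    and F: "\<And>t. -1 < t \<Longrightarrow> t < 1 \<Longrightarrow> (F has_real_derivative t ^ (r - 1) / (1 - t ^ k)) (at t)"
    and u: "-1 < u" "u < 1"
  shows "(\<lambda>j. u ^ (k * j + r) / real (k * j + r)) sums (F u - F 0)"
proof -
  define \<rho> where "\<rho> = r - 1"
  have \<rho>: "\<rho> < k" "Suc \<rho> = r" using r unfolding \<rho>_def by auto
  define f where "f n = (if n mod k = \<rho> then 1 / real (Suc n) else 0)" for n
  define P where "P x = (\<Sum>n. f n * x ^ Suc n)" for x :: real
  have P_sums: "(\<lambda>j. x ^ (k * j + r) / real (k * j + r)) sums P x" if "\<bar>x\<bar> < 1" for x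
  proof -
    have "\<bar>f n\<bar> \<le> 1" for n unfolding f_def by auto
    then have bound: "norm (f n * x ^ Suc n) \<le> \<bar>x\<bar> ^ Suc n" for n
      using mult_right_mono[of "\<bar>f n\<bar>" 1 "\<bar>x\<bar> ^ Suc n"] by (simp add: abs_mult power_abs)
    have "summable (\<lambda>n. f n * x ^ Suc n)"
      by (rule summable_comparison_test'[where N = 0, OF _ bound]) (use that in simp)
    then have "(\<lambda>n. f n * x ^ Suc n) sums P x" unfolding P_def by (rule summable_sums)
    then show ?thesis
      using k \<rho>(1) by (subst (asm) sums_reindex_residue[symmetric, OF k \<rho>(1)])
        (simp_all add: f_def \<rho>(2)[symmetric] algebra_simps)
  qed
  have P_deriv: "DERIV P x :> x ^ \<rho> / (1 - x ^ k)" if "-1 < x" "x < 1" for x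
  proof -
    have coeff: "f n * real (Suc n) = (if n mod k = \<rho> then 1 else 0)" for n
      unfolding f_def by simp
    have "summable (\<lambda>n. f n * real (Suc n) * y ^ n)" if "y \<in> {-1<..<1}" for y
      using sums_geometric_residue[OF k \<rho>(1), of y] that unfolding coeff
      by (auto simp: abs_less_iff sums_summable)
    then have "DERIV P x :> (\<Sum>n. f n * real (Suc n) * x ^ n)"
      unfolding P_def using that by (intro DERIV_power_series') auto
    moreover have "(\<Sum>n. f n * real (Suc n) * x ^ n) = x ^ \<rho> / (1 - x ^ k)"
      using sums_geometric_residue[OF k \<rho>(1), of x] that unfolding coeff
      by (auto simp: abs_less_iff sums_iff)
    ultimately show ?thesis by simp
  qed
  have "P u - F u = P 0 - F 0"
    using u by (intro DERIV_isconst3[of "-1" 1 u 0 "\<lambda>x. P x - F x"])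
      (auto intro!: DERIV_diff[OF P_deriv F, THEN DERIV_cong] simp: \<rho>_def)
  moreover have "P 0 = 0" unfolding P_def by simp
  ultimately have "P u = F u - F 0" by simp
  then show ?thesis using P_sums[of u] u by (simp add: abs_less_iff)
qed

lemma quadratic_pos: "(t::real) ^ 2 + t + 1 > 0"
proof -
  have "t ^ 2 + t + 1 = (t + 1/2) ^ 2 + 3/4" by (simp add: power2_eq_square algebra_simps)
  then show ?thesis by (simp add: add_nonneg_pos)
qed

lemma one_minus_cube: "1 - (t::real) ^ 3 = (1 - t) * (t ^ 2 + t + 1)"
  by (simp add: power2_eq_square power3_eq_cube algebra_simps)

lemma has_real_derivative_arctan_quadratic:
  "((\<lambda>t. sqrt 3 / 3 * arctan ((2 * t + 1) / sqrt 3)) has_real_derivative 1 / (2 * (t ^ 2 + t + 1))) (at t)"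
proof -
  have pos: "3 + (2 * t + 1)\<^sup>2 > 0" by (simp add: add_pos_nonneg)
  have "inverse (1 + ((2 * t + 1) / sqrt 3)\<^sup>2) = 3 / (3 + (2 * t + 1)\<^sup>2)"
    using pos by (simp add: power_divide field_simps)
  then have "sqrt 3 / 3 * (inverse (1 + ((2 * t + 1) / sqrt 3)\<^sup>2) * (2 / sqrt 3))
      = 2 / (3 + (2 * t + 1)\<^sup>2)"
    by simp
  also have "3 + (2 * t + 1)\<^sup>2 = 2 * (2 * (t ^ 2 + t + 1))" by (simp add: power2_eq_square algebra_simps)
  also have "2 / (2 * (2 * (t ^ 2 + t + 1))) = 1 / (2 * (t ^ 2 + t + 1))"
    by (rule nonzero_divide_mult_cancel_left) simp
  finally show ?thesis by (auto intro!: derivative_eq_intros)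
qed

lemma has_real_derivative_cube_antiderivatives:
  assumes t: "-1 < t" "t < 1"
  shows "((\<lambda>t. - ln (1 - t) / 3 + ln (t ^ 2 + t + 1) / 6 + sqrt 3 / 3 * arctan ((2 * t + 1) / sqrt 3))
     has_real_derivative 1 / (1 - t ^ 3)) (at t)"
    and "((\<lambda>t. - ln (1 - t) / 3 + ln (t ^ 2 + t + 1) / 6 - sqrt 3 / 3 * arctan ((2 * t + 1) / sqrt 3))
     has_real_derivative t / (1 - t ^ 3)) (at t)"
proof -
  have Q: "t ^ 2 + t + 1 > 0" by (rule quadratic_pos)
  have d1: "((\<lambda>t. - ln (1 - t) / 3) has_real_derivative 1 / (3 * (1 - t))) (at t)"
    using t by (auto intro!: derivative_eq_intros simp: field_simps)
  have d2: "((\<lambda>t. ln (t ^ 2 + t + 1) / 6) has_real_derivative (2 * t + 1) / (6 * (t ^ 2 + t + 1))) (at t)"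
    using Q by (auto intro!: derivative_eq_intros simp: field_simps power2_eq_square)
  have "1 / (3 * (1 - t)) + (2 * t + 1) / (6 * (t ^ 2 + t + 1)) + 1 / (2 * (t ^ 2 + t + 1)) = 1 / (1 - t ^ 3)"
    using t Q by (simp add: one_minus_cube divide_simps) (simp add: algebra_simps power2_eq_square)
  then show "((\<lambda>t. - ln (1 - t) / 3 + ln (t ^ 2 + t + 1) / 6 + sqrt 3 / 3 * arctan ((2 * t + 1) / sqrt 3))
     has_real_derivative 1 / (1 - t ^ 3)) (at t)"
    using DERIV_add[OF DERIV_add[OF d1 d2] has_real_derivative_arctan_quadratic] by simp
  have "1 / (3 * (1 - t)) + (2 * t + 1) / (6 * (t ^ 2 + t + 1)) - 1 / (2 * (t ^ 2 + t + 1)) = t / (1 - t ^ 3)"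
    using t Q by (simp add: one_minus_cube divide_simps) (simp add: algebra_simps power2_eq_square)
  then show "((\<lambda>t. - ln (1 - t) / 3 + ln (t ^ 2 + t + 1) / 6 - sqrt 3 / 3 * arctan ((2 * t + 1) / sqrt 3))
     has_real_derivative t / (1 - t ^ 3)) (at t)"
    using DERIV_diff[OF DERIV_add[OF d1 d2] has_real_derivative_arctan_quadratic] by simp
qed

lemma limit_term_2_0: "limit_term 2 c 0 = 2 * c * (1 - c)"
proof -
  have "{1..2::nat} = {1, 2}" by auto
  then show ?thesis by (simp add: limit_term_def hit_prob_def)
qed

lemma limit_term_2_Suc:
  "limit_term 2 c (Suc j) = 4 * c * ((1 - c) ^ (2 * Suc j + 1) / real (2 * Suc j + 1))
     + 2 * c ^ 2 * ((1 - c) ^ (2 * j + 2) / real (2 * j + 2))"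
proof -
  have "{1..2::nat} = {1, 2}" by auto
  moreover have "2 * (Suc j + 1) - 1 = 2 * Suc j + 1" "2 * (Suc j + 1) - 2 = 2 * j + 2" by simp_all
  moreover have "real (2 * (Suc j + 1)) - 1 = real (2 * Suc j + 1)"
    "real (2 * (Suc j + 1)) - 2 = real (2 * j + 2)" by simp_all
  ultimately show ?thesis by (simp add: limit_term_def hit_prob_def field_simps)
qed

lemma suminf_limit_term_2:
  assumes c: "0 < c" "c < 1"
  shows "(\<Sum>j. limit_term 2 c j) = -2*c*(1-c) + (2*c - c^2) * ln (2-c) - (2*c + c^2) * ln c"
proof -
  define u where "u = 1 - c"
  have u: "-1 < u" "u < 1" using c unfolding u_def by auto
  have sq: "1 - t * t > 0" if "-1 < t" "t < 1" for t :: real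
    using abs_square_less_1[of t] that by (simp add: power2_eq_square abs_less_iff)
  have "(\<lambda>j. u ^ (2 * j + 1) / real (2 * j + 1)) sums ((ln (1 + u) - ln (1 - u)) / 2 - 0)"
    using sums_power_div_exponent[of 2 1 "\<lambda>t. (ln (1 + t) - ln (1 - t)) / 2", OF _ _ _ _ u] sq
    by (fastforce intro!: derivative_eq_intros simp: field_simps power2_eq_square)
  then have s1: "(\<lambda>j. u ^ (2 * Suc j + 1) / real (2 * Suc j + 1)) sums ((ln (1 + u) - ln (1 - u)) / 2 - u)"
    by (subst sums_Suc_iff) simp
  have s2: "(\<lambda>j. u ^ (2 * j + 2) / real (2 * j + 2)) sums (- ln (1 - u ^ 2) / 2 - 0)"
    using sums_power_div_exponent[of 2 2 "\<lambda>t. - ln (1 - t ^ 2) / 2", OF _ _ _ _ u] sq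
    by (fastforce intro!: derivative_eq_intros simp: field_simps power2_eq_square)
  have "(\<lambda>j. limit_term 2 c (Suc j)) sums
      (4 * c * ((ln (1 + u) - ln (1 - u)) / 2 - u) + 2 * c ^ 2 * (- ln (1 - u ^ 2) / 2 - 0))"
    unfolding limit_term_2_Suc u_def[symmetric] by (intro sums_add sums_mult s1 s2)
  then have "(\<Sum>j. limit_term 2 c j)
      = 4 * c * ((ln (1 + u) - ln (1 - u)) / 2 - u) - c ^ 2 * ln (1 - u ^ 2) + limit_term 2 c 0"
    by (subst (asm) sums_Suc_iff) (simp add: sums_iff)
  moreover have "1 + u = 2 - c" "1 - u = c" "1 - u ^ 2 = c * (2 - c)"
    unfolding u_def by (simp_all add: power2_eq_square algebra_simps)
  moreover have "ln (c * (2 - c)) = ln c + ln (2 - c)" using c by (simp add: ln_mult)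
  ultimately show ?thesis
    unfolding limit_term_2_0 u_def by (simp add: field_simps power2_eq_square)
qed

lemma limit_term_3_0: "limit_term 3 c 0 = 3 * c * (1 - c) ^ 2 + 3 * c ^ 2 * (1 - c)"
proof -
  have "{1..3::nat} = {1, 2, 3}" by auto
  moreover have "(3 choose 1) = 3" "(3 choose 2) = 3" "(3 choose 3) = 1"
    by (simp_all add: numeral_eq_Suc binomial_Suc_Suc)
  ultimately show ?thesis by (simp add: limit_term_def hit_prob_def power2_eq_square)
qed

lemma limit_term_3_Suc:
  "limit_term 3 c (Suc j) = 9 * c * ((1 - c) ^ (3 * Suc j + 2) / real (3 * Suc j + 2))
     + 9 * c ^ 2 * ((1 - c) ^ (3 * Suc j + 1) / real (3 * Suc j + 1))
     + 3 * c ^ 3 * ((1 - c) ^ (3 * j + 3) / real (3 * j + 3))"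
proof -
  have sum: "(\<Sum>a\<in>{1..3::nat}. f a) = f 1 + f 2 + f 3" for f :: "nat \<Rightarrow> real"
  proof -
    have "{1..3::nat} = {1, 2, 3}" by auto
    then show ?thesis by (simp add: add.assoc)
  qed
  have choose: "(3 choose 1) = 3" "(3 choose 2) = 3" "(3 choose 3) = 1"
    by (simp_all add: numeral_eq_Suc binomial_Suc_Suc)
  have exp: "3 * (Suc j + 1) - 1 = 3 * Suc j + 2" "3 * (Suc j + 1) - 2 = 3 * Suc j + 1"
    "3 * (Suc j + 1) - 3 = 3 * j + 3" by simp_all
  have den: "real (3 * (Suc j + 1)) - 1 = real (3 * Suc j + 2)"
    "real (3 * (Suc j + 1)) - 2 = real (3 * Suc j + 1)" "real (3 * (Suc j + 1)) - 3 = real (3 * j + 3)"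
    by simp_all
  show ?thesis unfolding limit_term_def hit_prob_def sum choose exp den by (simp add: field_simps)
qed

lemma sums_power_div_exponent_3:
  assumes u: "-1 < u" "u < 1"
  shows "(\<lambda>j. u ^ (3 * j + 1) / real (3 * j + 1)) sums
      (- ln (1 - u) / 3 + ln (u ^ 2 + u + 1) / 6 + sqrt 3 / 3 * arctan ((2 * u + 1) / sqrt 3)
       - sqrt 3 / 3 * (pi / 6))"
    and "(\<lambda>j. u ^ (3 * j + 2) / real (3 * j + 2)) sums
      (- ln (1 - u) / 3 + ln (u ^ 2 + u + 1) / 6 - sqrt 3 / 3 * arctan ((2 * u + 1) / sqrt 3)
       + sqrt 3 / 3 * (pi / 6))"
    and "(\<lambda>j. u ^ (3 * j + 3) / real (3 * j + 3)) sums (- ln (1 - u ^ 3) / 3)"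
proof -
  have arctan_0: "arctan (1 / sqrt 3) = pi / 6"
    using arctan_tan[of "pi / 6"] tan_30 by simp
  note F = has_real_derivative_cube_antiderivatives
  define F1 F2 where
    "F1 t = - ln (1 - t) / 3 + ln (t ^ 2 + t + 1) / 6 + sqrt 3 / 3 * arctan ((2 * t + 1) / sqrt 3)"
    and "F2 t = - ln (1 - t) / 3 + ln (t ^ 2 + t + 1) / 6 - sqrt 3 / 3 * arctan ((2 * t + 1) / sqrt 3)"
    for t :: real
  have "(\<lambda>j. u ^ (3 * j + 1) / real (3 * j + 1)) sums (F1 u - F1 0)"
    by (rule sums_power_div_exponent) (use F(1) u in \<open>simp_all add: F1_def\<close>)
  then show "(\<lambda>j. u ^ (3 * j + 1) / real (3 * j + 1)) sums
      (- ln (1 - u) / 3 + ln (u ^ 2 + u + 1) / 6 + sqrt 3 / 3 * arctan ((2 * u + 1) / sqrt 3)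
       - sqrt 3 / 3 * (pi / 6))"
    using arctan_0 by (simp add: F1_def)
  have "(\<lambda>j. u ^ (3 * j + 2) / real (3 * j + 2)) sums (F2 u - F2 0)"
    by (rule sums_power_div_exponent) (use F(2) u in \<open>simp_all add: F2_def\<close>)
  then show "(\<lambda>j. u ^ (3 * j + 2) / real (3 * j + 2)) sums
      (- ln (1 - u) / 3 + ln (u ^ 2 + u + 1) / 6 - sqrt 3 / 3 * arctan ((2 * u + 1) / sqrt 3)
       + sqrt 3 / 3 * (pi / 6))"
    using arctan_0 by (simp add: F2_def)
  have "1 - t ^ 3 > 0" if "t < 1" for t :: real
    using that quadratic_pos[of t] by (simp add: one_minus_cube)
  then show "(\<lambda>j. u ^ (3 * j + 3) / real (3 * j + 3)) sums (- ln (1 - u ^ 3) / 3)"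
    using sums_power_div_exponent[of 3 3 "\<lambda>t. - ln (1 - t ^ 3) / 3", OF _ _ _ _ u]
    by (fastforce intro!: derivative_eq_intros simp: field_simps power2_eq_square)
qed

lemma suminf_limit_term_3:
  assumes c: "0 < c" "c < 1"
  shows "(\<Sum>j. limit_term 3 c j) = -(3/2)*(1-c)*c*(1+3*c) - (3*c + 3*c^2 + c^3) * ln c
                 + ((3/2)*c + (3/2)*c^2 - c^3) * ln (c^2 - 3*c + 3)
                 + 3*sqrt 3*(c^2 - c) * arctan ((3 - 2*c)/sqrt 3)
                 + sqrt 3 * pi / 2 * (c - c^2)"
proof -
  define u where "u = 1 - c"
  have u: "-1 < u" "u < 1" using c unfolding u_def by auto
  define L1 L2 A where "L1 = ln (1 - u)" and "L2 = ln (u ^ 2 + u + 1)"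
    and "A = arctan ((2 * u + 1) / sqrt 3)"
  note s = sums_power_div_exponent_3[OF u, folded L1_def L2_def A_def]
  have s1: "(\<lambda>j. u ^ (3 * Suc j + 1) / real (3 * Suc j + 1)) sums
      (- L1 / 3 + L2 / 6 + sqrt 3 / 3 * A - sqrt 3 / 3 * (pi / 6) - u)"
    using s(1) by (subst sums_Suc_iff) simp
  have s2: "(\<lambda>j. u ^ (3 * Suc j + 2) / real (3 * Suc j + 2)) sums
      (- L1 / 3 + L2 / 6 - sqrt 3 / 3 * A + sqrt 3 / 3 * (pi / 6) - u ^ 2 / 2)"
    using s(2) by (subst sums_Suc_iff) (simp add: power2_eq_square)
  have "(\<lambda>j. limit_term 3 c (Suc j)) sums
      (9 * c * (- L1 / 3 + L2 / 6 - sqrt 3 / 3 * A + sqrt 3 / 3 * (pi / 6) - u ^ 2 / 2)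
     + 9 * c ^ 2 * (- L1 / 3 + L2 / 6 + sqrt 3 / 3 * A - sqrt 3 / 3 * (pi / 6) - u)
     + 3 * c ^ 3 * (- ln (1 - u ^ 3) / 3))"
    unfolding limit_term_3_Suc u_def[symmetric] by (intro sums_add sums_mult s1 s2 s(3))
  then have "(\<Sum>j. limit_term 3 c j) =
      9 * c * (- L1 / 3 + L2 / 6 - sqrt 3 / 3 * A + sqrt 3 / 3 * (pi / 6) - u ^ 2 / 2)
     + 9 * c ^ 2 * (- L1 / 3 + L2 / 6 + sqrt 3 / 3 * A - sqrt 3 / 3 * (pi / 6) - u)
     + 3 * c ^ 3 * (- ln (1 - u ^ 3) / 3) + limit_term 3 c 0"
    by (subst (asm) sums_Suc_iff) (simp add: sums_iff)
  moreover have Q: "c ^ 2 - 3 * c + 3 > 0"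
    using quadratic_pos[of "1 - c"] by (simp add: power2_eq_square algebra_simps)
  moreover have "L1 = ln c" "L2 = ln (c ^ 2 - 3 * c + 3)" "A = arctan ((3 - 2 * c) / sqrt 3)"
    unfolding L1_def L2_def A_def u_def by (simp_all add: power2_eq_square algebra_simps)
  moreover have "ln (1 - u ^ 3) = ln c + ln (c ^ 2 - 3 * c + 3)"
  proof -
    have "1 - u ^ 3 = c * (c ^ 2 - 3 * c + 3)"
      unfolding u_def by (simp add: power2_eq_square power3_eq_cube algebra_simps)
    then show ?thesis using c Q by (simp add: ln_mult)
  qed
  ultimately show ?thesis
    unfolding limit_term_3_0 u_def by (simp add: field_simps power2_eq_square power3_eq_cube)
qed

theorem mainTheorem3:
  fixes c :: real
  assumes "0 < c" "c < 1"
  shows "(\<forall>M :: nat \<Rightarrow> nat.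
            (\<forall>n\<ge>1. 1 \<le> M n \<and> M n \<le> 2*n - 1)
          \<and> (\<lambda>n. real (M n) / real (2*n)) \<longlonglongrightarrow> c
          \<longrightarrow> (\<lambda>n. win_prob n 2 (M n)) \<longlonglongrightarrow>
                (-2*c*(1-c) + (2*c - c^2) * ln (2-c) - (2*c + c^2) * ln c))
       \<and> (\<forall>M :: nat \<Rightarrow> nat.
            (\<forall>n\<ge>1. 1 \<le> M n \<and> M n \<le> 3*n - 1)
          \<and> (\<lambda>n. real (M n) / real (3*n)) \<longlonglongrightarrow> c
          \<longrightarrow> (\<lambda>n. win_prob n 3 (M n)) \<longlonglongrightarrow>
                (-(3/2)*(1-c)*c*(1+3*c) - (3*c + 3*c^2 + c^3) * ln c
                 + ((3/2)*c + (3/2)*c^2 - c^3) * ln (c^2 - 3*c + 3)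
                 + 3*sqrt 3*(c^2 - c) * arctan ((3 - 2*c)/sqrt 3)
                 + sqrt 3 * pi / 2 * (c - c^2)))"
proof (intro conjI allI impI)
  fix M :: "nat \<Rightarrow> nat"
  assume "(\<forall>n\<ge>1. 1 \<le> M n \<and> M n \<le> 2*n - 1) \<and> (\<lambda>n. real (M n) / real (2*n)) \<longlonglongrightarrow> c"
  then have "(\<lambda>n. win_prob n 2 (M n)) \<longlonglongrightarrow> (\<Sum>j. limit_term 2 c j)"
    using assms by (intro win_prob_tendsto_suminf) auto
  then show "(\<lambda>n. win_prob n 2 (M n)) \<longlonglongrightarrow>
      (-2*c*(1-c) + (2*c - c^2) * ln (2-c) - (2*c + c^2) * ln c)"
    by (simp only: suminf_limit_term_2[OF assms])
next
  fix M :: "nat \<Rightarrow> nat"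
  assume "(\<forall>n\<ge>1. 1 \<le> M n \<and> M n \<le> 3*n - 1) \<and> (\<lambda>n. real (M n) / real (3*n)) \<longlonglongrightarrow> c"
  then have "(\<lambda>n. win_prob n 3 (M n)) \<longlonglongrightarrow> (\<Sum>j. limit_term 3 c j)"
    using assms by (intro win_prob_tendsto_suminf) auto
  then show "(\<lambda>n. win_prob n 3 (M n)) \<longlonglongrightarrow>
      (-(3/2)*(1-c)*c*(1+3*c) - (3*c + 3*c^2 + c^3) * ln c
       + ((3/2)*c + (3/2)*c^2 - c^3) * ln (c^2 - 3*c + 3)
       + 3*sqrt 3*(c^2 - c) * arctan ((3 - 2*c)/sqrt 3)
       + sqrt 3 * pi / 2 * (c - c^2))"
    by (simp only: suminf_limit_term_3[OF assms])
qed

end
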